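(* Let $X$ be a strongly connected finite digraph with $\delta(X)=0$. Then there exists a nonzero integer $m(X)$ such that $$g_X^*(1)=m(X)\cdot\#\mathrm{BF}(X)_{\rm tors}.$$
   Context: A digraph $X=(V_X,E_X)$ has incidence map $e\mapsto(o(e),t(e))$; it is strongly connected if for any two distinct vertices there is a directed path from the first to the second. For finite $X$: $\mathcal{A}_X:\mathbb{Z}V_X\to\mathbb{Z}V_X$, $v\mapsto\sum_{e:o(e)=v}t(e)$; Bowen--Franks operator $\mathcal{BF}_X=\mathcal{I}-\mathcal{A}_X$; $\mathrm{BF}(X)=\mathrm{coker}(\mathcal{BF}_X)$. $g_X(u)=\det(\mathcal{I}-\mathcal{A}_Xu)\in\mathbb{Z}[u]$; $r_X=\mathrm{ord}_{u=1}g_X(u)$; $g_X^*(1)$ is the first non-vanishing coefficient of the Taylor expansion of $g_X$ at $u=1$ (i.e. the coefficient of $(u-1)^{r_X}$). $\delta(X)=r_X-\mathrm{rank}_{\mathbb{Z}}\mathrm{BF}(X)$. *)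

theory Defs
  imports "Graph_Theory.Digraph" "Graph_Theory.Digraph_Component"
    "HOL-Combinatorics.Permutations" "HOL-Computational_Algebra.Polynomial"
begin

text \<open>A finite digraph X is a fin_digraph G (multiple arcs and loops allowed),
  with o = tail G and t = head G.\<close>

text \<open>Number of arcs from v to w: coefficient of w in A_X(v).\<close>
definition adj :: "('v,'e) pre_digraph \<Rightarrow> 'v \<Rightarrow> 'v \<Rightarrow> int" where
  "adj G v w = int (card {e \<in> arcs G. tail G e = v \<and> head G e = w})"

text \<open>The free abelian group Z V_X, as finitely supported integer functions on verts.\<close>
definition ZV :: "('v,'e) pre_digraph \<Rightarrow> ('v \<Rightarrow> int) set" where
  "ZV G = {f. \<forall>v. v \<notin> verts G \<longrightarrow> f v = 0}"

text \<open>The Bowen--Franks operator I - A_X acting on Z V_X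
  (A_X sends the basis vector v to the sum of t(e) over arcs e with o(e) = v).\<close>
definition bf_op :: "('v,'e) pre_digraph \<Rightarrow> ('v \<Rightarrow> int) \<Rightarrow> ('v \<Rightarrow> int)" where
  "bf_op G f = (\<lambda>w. if w \<in> verts G then f w - (\<Sum>v\<in>verts G. f v * adj G v w) else 0)"

definition bf_image :: "('v,'e) pre_digraph \<Rightarrow> ('v \<Rightarrow> int) set" where
  "bf_image G = bf_op G ` ZV G"

text \<open>Congruence modulo the image: BF(X) = ZV G // bf_rel G.\<close>
definition bf_rel :: "('v,'e) pre_digraph \<Rightarrow> (('v \<Rightarrow> int) \<times> ('v \<Rightarrow> int)) set" where
  "bf_rel G = {(x,y). x \<in> ZV G \<and> y \<in> ZV G \<and> x - y \<in> bf_image G}"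

definition bf_tors_reps :: "('v,'e) pre_digraph \<Rightarrow> ('v \<Rightarrow> int) set" where
  "bf_tors_reps G = {x \<in> ZV G. \<exists>k::int. k \<noteq> 0 \<and> (\<lambda>w. k * x w) \<in> bf_image G}"

definition bf_tors_card :: "('v,'e) pre_digraph \<Rightarrow> nat" where
  "bf_tors_card G = card (bf_tors_reps G // bf_rel G)"

definition bf_rank :: "('v,'e) pre_digraph \<Rightarrow> nat" where
  "bf_rank G = Max {card S | S. finite S \<and> S \<subseteq> ZV G \<and>
      (\<forall>c :: ('v \<Rightarrow> int) \<Rightarrow> int.
         (\<lambda>w. \<Sum>s\<in>S. c s * s w) \<in> bf_image G \<longrightarrow> (\<forall>s\<in>S. c s = 0))}"

definition det_on :: "'v set \<Rightarrow> ('v \<Rightarrow> 'v \<Rightarrow> 'a::comm_ring_1) \<Rightarrow> 'a" where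
  "det_on V M = (\<Sum>p \<in> {p. p permutes V}. of_int (sign p) * (\<Prod>v\<in>V. M v (p v)))"

definition gX :: "('v,'e) pre_digraph \<Rightarrow> int poly" where
  "gX G = det_on (verts G) (\<lambda>v w. (if v = w then 1 else 0) - [:0, adj G v w:])"

definition rX :: "('v,'e) pre_digraph \<Rightarrow> nat" where
  "rX G = order 1 (gX G)"

text \<open>g_X^*(1): coefficient of (u-1)^{r_X} in the Taylor expansion of g_X at 1.\<close>
definition gX_star :: "('v,'e) pre_digraph \<Rightarrow> int" where
  "gX_star G = coeff (pcompose (gX G) [:1, 1:]) (rX G)"

definition delta :: "('v,'e) pre_digraph \<Rightarrow> int" where
  "delta G = int (rX G) - int (bf_rank G)"

end

(* With N = I - A and C = -A one has g_X(1 + x) = det(N + x C). Integer row additions,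
   column additions and column swaps, applied to N and C simultaneously, change det(N + x C)
   at most by a sign, leave the image of N unchanged (row operations) or move it by a linear
   automorphism of Z^V (column operations), so BF(X) = Z^V / image N keeps its torsion order
   and rank. A Euclidean elimination brings N to diagonal form. Then the torsion order is
   |d| for d the product of the nonzero diagonal entries, the rank is the number r of zero
   diagonal entries, and every term of the Leibniz expansion of det(N + x C) contributes a
   multiple of d to the coefficient of x^r. As delta(X) = 0, r = r_X and this coefficient is
   +-g_X^*(1), which is nonzero because g_X(0) = 1. *)

theory Submission
  imports Defs
begin

section \<open>Determinants and polynomials\<close>

lemma det_on_transpose:
  assumes "finite V"
  shows "det_on V (\<lambda>v w. M w v) = det_on V M"
proof -
  have "det_on V M = (\<Sum>p \<in> {p. p permutes V}. of_int (sign (inv p)) * (\<Prod>v\<in>V. M v (inv p v)))"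
    unfolding det_on_def by (rule sum_permutations_inverse)
  also have "\<dots> = (\<Sum>p \<in> {p. p permutes V}. of_int (sign p) * (\<Prod>v\<in>V. M (p v) v))"
  proof (rule sum.cong[OF refl])
    fix p assume "p \<in> {p. p permutes V}"
    then have p: "p permutes V" by simp
    have "sign (inv p) = sign p"
      using sign_inverse permutes_imp_permutation[OF assms p] by blast
    moreover have "(\<Prod>v\<in>V. M (p v) v) = (\<Prod>v\<in>V. M v (inv p v))"
      using prod.permutes_inv[OF p, of "\<lambda>a b. M a b"] by simp
    ultimately show "of_int (sign (inv p)) * (\<Prod>v\<in>V. M v (inv p v))
        = of_int (sign p) * (\<Prod>v\<in>V. M (p v) v)"
      by simp
  qed
  finally show ?thesis unfolding det_on_def by simp
qed

lemma det_on_swap_cols: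
  assumes "finite V" "i \<in> V" "k \<in> V" "i \<noteq> k"
  shows "det_on V (\<lambda>v w. M v (transpose i k w)) = - det_on V M"
proof -
  have t: "transpose i k permutes V" using assms by (simp add: permutes_swap_id)
  have "det_on V M = (\<Sum>p \<in> {p. p permutes V}.
      of_int (sign (transpose i k \<circ> p)) * (\<Prod>v\<in>V. M v ((transpose i k \<circ> p) v)))"
    unfolding det_on_def by (rule setum_permutations_compose_left[OF t])
  also have "\<dots> = (\<Sum>p \<in> {p. p permutes V}. - (of_int (sign p) * (\<Prod>v\<in>V. M v (transpose i k (p v)))))"
  proof (rule sum.cong[OF refl])
    fix p assume "p \<in> {p. p permutes V}"
    then have p: "p permutes V" by simp
    have "sign (transpose i k \<circ> p) = sign (transpose i k) * sign p"
      using permutes_imp_permutation[OF assms(1) p] permutes_imp_permutation[OF assms(1) t]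
      by (rule sign_compose[rotated])
    then have "sign (transpose i k \<circ> p) = - sign p" using assms(4) by (simp add: sign_swap_id)
    then show "of_int (sign (transpose i k \<circ> p)) * (\<Prod>v\<in>V. M v ((transpose i k \<circ> p) v))
        = - (of_int (sign p) * (\<Prod>v\<in>V. M v (transpose i k (p v))))"
      by simp
  qed
  finally show ?thesis unfolding det_on_def by (simp add: sum_negf)
qed

lemma det_on_linear_row:
  fixes M :: "'v \<Rightarrow> 'v \<Rightarrow> 'a::comm_ring_1"
  assumes "finite V" "k \<in> V"
  shows "det_on V (\<lambda>v w. if v = k then a w + c * b w else M v w)
       = det_on V (\<lambda>v w. if v = k then a w else M v w) + c * det_on V (\<lambda>v w. if v = k then b w else M v w)"
proof -
  have row_k: "(\<Prod>v\<in>V. if v = k then f (p v) else M v (p v)) = f (p k) * (\<Prod>v\<in>V-{k}. M v (p v))"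
    for f :: "'v \<Rightarrow> 'a" and p
  proof -
    have "(\<Prod>v\<in>V-{k}. if v = k then f (p v) else M v (p v)) = (\<Prod>v\<in>V-{k}. M v (p v))"
      by (rule prod.cong) auto
    then show ?thesis by (simp add: prod.remove[OF assms])
  qed
  show ?thesis unfolding det_on_def
    by (simp add: row_k[of "\<lambda>x. a x + c * b x"] row_k[of a] row_k[of b]
        sum_distrib_left sum.distrib[symmetric] algebra_simps)
qed

lemma det_on_eq_rows:
  fixes M :: "'v \<Rightarrow> 'v \<Rightarrow> 'a::{idom,ring_char_0}"
  assumes "finite V" "i \<in> V" "k \<in> V" "i \<noteq> k" "\<And>w. M i w = M k w"
  shows "det_on V M = 0"
proof -
  have "(\<lambda>v w. M (transpose i k w) v) = (\<lambda>v w. M w v)"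
    using assms(5) by (auto simp: fun_eq_iff transpose_def)
  then have "det_on V (\<lambda>v w. M w v) = - det_on V (\<lambda>v w. M w v)"
    using det_on_swap_cols[OF assms(1-4), of "\<lambda>v w. M w v"] by simp
  then have "2 * det_on V M = 0" using det_on_transpose[OF assms(1), of M] by simp
  then show ?thesis by simp
qed

lemma det_on_row_add:
  fixes M :: "'v \<Rightarrow> 'v \<Rightarrow> 'a::{idom,ring_char_0}"
  assumes "finite V" "i \<in> V" "k \<in> V" "i \<noteq> k"
  shows "det_on V (\<lambda>v w. if v = k then M k w + c * M i w else M v w) = det_on V M"
proof -
  have "det_on V (\<lambda>v w. if v = k then M i w else M v w) = 0"
    by (rule det_on_eq_rows[OF assms]) auto
  moreover have "(\<lambda>v w. if v = k then M k w else M v w) = M" by (auto simp: fun_eq_iff)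
  ultimately show ?thesis using det_on_linear_row[OF assms(1,3), of "M k" c "M i" M] by simp
qed

lemma det_on_col_add:
  fixes M :: "'v \<Rightarrow> 'v \<Rightarrow> 'a::{idom,ring_char_0}"
  assumes "finite V" "i \<in> V" "k \<in> V" "i \<noteq> k"
  shows "det_on V (\<lambda>v w. if w = k then M v k + c * M v i else M v w) = det_on V M"
proof -
  let ?X = "\<lambda>v w. if w = k then M v k + c * M v i else M v w"
  have "det_on V ?X = det_on V (\<lambda>v w. ?X w v)"
    using det_on_transpose[OF assms(1), of ?X] by simp
  also have "\<dots> = det_on V (\<lambda>v w. M w v)"
    using det_on_row_add[OF assms, of "\<lambda>a b. M b a" c] by simp
  also have "\<dots> = det_on V M" by (rule det_on_transpose[OF assms(1)])
  finally show ?thesis .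
qed

lemma det_on_id:
  assumes "finite V"
  shows "det_on V (\<lambda>v w. if v = w then (1::'a::comm_ring_1) else 0) = 1"
proof -
  have "of_int (sign p) * (\<Prod>v\<in>V. if v = p v then (1::'a) else 0) = (if p = id then 1 else 0)"
    if p: "p permutes V" for p
  proof (cases "p = id")
    case False
    then obtain v where v: "p v \<noteq> v" by (auto simp: fun_eq_iff)
    then have "v \<in> V" using p unfolding permutes_def by auto
    then have "(\<Prod>v\<in>V. if v = p v then (1::'a) else 0) = 0"
      using assms v by (intro prod_zero) (auto intro!: bexI[of _ v])
    then show ?thesis using False by simp
  qed (simp add: sign_id)
  then have "det_on V (\<lambda>v w. if v = w then (1::'a) else 0) = (\<Sum>p\<in>{p. p permutes V}. if p = id then 1 else 0)"
    unfolding det_on_def by (intro sum.cong) auto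
  also have "\<dots> = 1" using permutes_id[of V] finite_permutations[OF assms] by (simp add: sum.delta)
  finally show ?thesis .
qed

lemma poly_det_on: "poly (det_on V M) x = det_on V (\<lambda>v w. poly (M v w) x)"
  unfolding det_on_def by (simp add: poly_sum poly_prod)

lemma pcompose_det_on: "pcompose (det_on V M) r = det_on V (\<lambda>v w. pcompose (M v w) r)"
  unfolding det_on_def by (simp add: pcompose_sum pcompose_prod pcompose_mult of_int_poly pcompose_smult)

lemma coeff_pcompose_order_nonzero:
  fixes g :: "'a::idom poly"
  assumes "g \<noteq> 0"
  shows "coeff (pcompose g [:1, 1:]) (order 1 g) \<noteq> 0"
proof -
  obtain q where q: "g = [:- 1, 1:] ^ order 1 g * q" "\<not> [:- 1, 1:] dvd q"
    using order_decomp[OF assms] by blast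
  have pow: "pcompose ([:- 1, 1:] ^ n) [:1, 1:] = (monom 1 n :: 'a poly)" for n :: nat
  proof (induction n)
    case (Suc n)
    have "pcompose ([:- 1, 1:] ^ Suc n) [:1, 1:]
        = pcompose [:- 1, 1:] [:1, 1:] * pcompose ([:- 1, 1:] ^ n) ([:1, 1:] :: 'a poly)"
      by (simp only: power_Suc pcompose_mult)
    also have "\<dots> = [:0, 1:] * monom 1 n"
      using Suc.IH by (simp add: pcompose_pCons)
    also have "\<dots> = monom 1 (Suc n)"
      by (simp add: monom_altdef)
    finally show ?case .
  qed (simp add: pcompose_1)
  have "pcompose g [:1, 1:] = monom 1 (order 1 g) * pcompose q [:1, 1:]"
    by (subst q(1)) (simp add: pcompose_mult pow)
  then have "coeff (pcompose g [:1, 1:]) (order 1 g) = poly q 1"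
    by (simp add: coeff_monom_mult poly_0_coeff_0[symmetric] poly_pcompose)
  then show ?thesis using q(2) poly_eq_0_iff_dvd[of q 1] by simp
qed

section \<open>Torsion order and rank of a quotient of Z^V\<close>

definition int_vecs :: "'v set \<Rightarrow> ('v \<Rightarrow> int) set" where
  "int_vecs V = {f. \<forall>v. v \<notin> V \<longrightarrow> f v = 0}"

definition quot_rel :: "'v set \<Rightarrow> ('v \<Rightarrow> int) set \<Rightarrow> (('v \<Rightarrow> int) \<times> ('v \<Rightarrow> int)) set" where
  "quot_rel V L = {(x, y). x \<in> int_vecs V \<and> y \<in> int_vecs V \<and> x - y \<in> L}"

definition tors_reps :: "'v set \<Rightarrow> ('v \<Rightarrow> int) set \<Rightarrow> ('v \<Rightarrow> int) set" where
  "tors_reps V L = {x \<in> int_vecs V. \<exists>k::int. k \<noteq> 0 \<and> (\<lambda>w. k * x w) \<in> L}"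

definition quot_tors_card :: "'v set \<Rightarrow> ('v \<Rightarrow> int) set \<Rightarrow> nat" where
  "quot_tors_card V L = card (tors_reps V L // quot_rel V L)"

definition indep_cards :: "'v set \<Rightarrow> ('v \<Rightarrow> int) set \<Rightarrow> nat set" where
  "indep_cards V L = {card S | S. finite S \<and> S \<subseteq> int_vecs V \<and>
      (\<forall>c :: ('v \<Rightarrow> int) \<Rightarrow> int. (\<lambda>w. \<Sum>s\<in>S. c s * s w) \<in> L \<longrightarrow> (\<forall>s\<in>S. c s = 0))}"

definition quot_rank :: "'v set \<Rightarrow> ('v \<Rightarrow> int) set \<Rightarrow> nat" where
  "quot_rank V L = Max (indep_cards V L)"

lemma int_vecs_diff: "x \<in> int_vecs V \<Longrightarrow> y \<in> int_vecs V \<Longrightarrow> x - y \<in> int_vecs V"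
  unfolding int_vecs_def by auto

lemma int_vecs_scale: "x \<in> int_vecs V \<Longrightarrow> (\<lambda>w. k * x w) \<in> int_vecs V"
  unfolding int_vecs_def by auto

lemma int_vecs_lincomb: "S \<subseteq> int_vecs V \<Longrightarrow> (\<lambda>w. \<Sum>s\<in>S. c s * s w) \<in> int_vecs V"
  unfolding int_vecs_def by (auto intro!: sum.neutral)

definition int_linear :: "(('v \<Rightarrow> int) \<Rightarrow> ('v \<Rightarrow> int)) \<Rightarrow> bool" where
  "int_linear \<psi> \<longleftrightarrow> (\<forall>x y. \<psi> (x - y) = \<psi> x - \<psi> y) \<and> (\<forall>k x. \<psi> (\<lambda>w. k * x w) = (\<lambda>w. k * \<psi> x w))"

lemma int_linear_diff: "int_linear \<psi> \<Longrightarrow> \<psi> (x - y) = \<psi> x - \<psi> y"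
  unfolding int_linear_def by blast

lemma int_linear_scale: "int_linear \<psi> \<Longrightarrow> \<psi> (\<lambda>w. k * x w) = (\<lambda>w. k * \<psi> x w)"
  unfolding int_linear_def by blast

lemma int_linear_lincomb:
  assumes "int_linear \<psi>"
  shows "\<psi> (\<lambda>w. \<Sum>s\<in>S. c s * s w) = (\<lambda>w. \<Sum>s\<in>S. c s * \<psi> s w)"
proof (induction S rule: infinite_finite_induct)
  case (insert a S)
  have "(\<lambda>w. \<Sum>s\<in>insert a S. c s * s w) = (\<lambda>w. c a * a w) - (\<lambda>w. (-1) * (\<Sum>s\<in>S. c s * s w))"
    using insert.hyps by (simp add: fun_eq_iff)
  then have "\<psi> (\<lambda>w. \<Sum>s\<in>insert a S. c s * s w)
      = (\<lambda>w. c a * \<psi> a w) - (\<lambda>w. (-1) * \<psi> (\<lambda>w. \<Sum>s\<in>S. c s * s w) w)"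
    by (simp only: int_linear_diff[OF assms] int_linear_scale[OF assms])
  then show ?case
    using insert by (simp add: fun_eq_iff)
qed (use int_linear_scale[OF assms, of 0 "\<lambda>w. 0"] in simp_all)

definition lin_aut_on ::
    "'v set \<Rightarrow> (('v \<Rightarrow> int) \<Rightarrow> ('v \<Rightarrow> int)) \<Rightarrow> (('v \<Rightarrow> int) \<Rightarrow> ('v \<Rightarrow> int)) \<Rightarrow> bool" where
  "lin_aut_on V \<psi> \<phi> \<longleftrightarrow> int_linear \<psi> \<and> int_linear \<phi> \<and> (\<forall>x. \<phi> (\<psi> x) = x) \<and> (\<forall>x. \<psi> (\<phi> x) = x) \<and>
     \<psi> ` int_vecs V \<subseteq> int_vecs V \<and> \<phi> ` int_vecs V \<subseteq> int_vecs V"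

lemma lin_aut_on_sym: "lin_aut_on V \<psi> \<phi> \<Longrightarrow> lin_aut_on V \<phi> \<psi>"
  unfolding lin_aut_on_def by blast

lemma lin_aut_on_id: "lin_aut_on V (\<lambda>x. x) (\<lambda>x. x)"
  unfolding lin_aut_on_def int_linear_def by simp

lemma lin_aut_on_comp:
  "lin_aut_on V \<psi>1 \<phi>1 \<Longrightarrow> lin_aut_on V \<psi>2 \<phi>2 \<Longrightarrow> lin_aut_on V (\<psi>2 \<circ> \<psi>1) (\<phi>1 \<circ> \<phi>2)"
  unfolding lin_aut_on_def int_linear_def by (auto simp: image_subset_iff)

lemma lin_aut_on_image_int_vecs:
  assumes "lin_aut_on V \<psi> \<phi>"
  shows "\<psi> ` int_vecs V = int_vecs V"
proof
  show "\<psi> ` int_vecs V \<subseteq> int_vecs V" using assms unfolding lin_aut_on_def by blast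
  show "int_vecs V \<subseteq> \<psi> ` int_vecs V"
  proof
    fix x assume "x \<in> int_vecs V"
    then have "\<phi> x \<in> int_vecs V" "\<psi> (\<phi> x) = x" using assms unfolding lin_aut_on_def by auto
    then show "x \<in> \<psi> ` int_vecs V" by (metis image_eqI)
  qed
qed

lemma tors_reps_image:
  assumes a: "lin_aut_on V \<psi> \<phi>"
  shows "tors_reps V (\<psi> ` L) = \<psi> ` tors_reps V L"
proof
  have lin: "int_linear \<psi>" "int_linear \<phi>" and inv: "\<And>x. \<phi> (\<psi> x) = x" "\<And>x. \<psi> (\<phi> x) = x"
    and Z: "\<And>x. x \<in> int_vecs V \<Longrightarrow> \<psi> x \<in> int_vecs V" "\<And>x. x \<in> int_vecs V \<Longrightarrow> \<phi> x \<in> int_vecs V"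
    using a unfolding lin_aut_on_def by auto
  show "\<psi> ` tors_reps V L \<subseteq> tors_reps V (\<psi> ` L)"
  proof
    fix y assume "y \<in> \<psi> ` tors_reps V L"
    then obtain x k where x: "x \<in> int_vecs V" "k \<noteq> 0" "(\<lambda>w. k * x w) \<in> L" and y: "y = \<psi> x"
      unfolding tors_reps_def by blast
    have "(\<lambda>w. k * y w) = \<psi> (\<lambda>w. k * x w)" using lin(1) y unfolding int_linear_def by simp
    then show "y \<in> tors_reps V (\<psi> ` L)" unfolding tors_reps_def using x y Z by blast
  qed
  show "tors_reps V (\<psi> ` L) \<subseteq> \<psi> ` tors_reps V L"
  proof
    fix y assume "y \<in> tors_reps V (\<psi> ` L)"
    then obtain k l where y: "y \<in> int_vecs V" "k \<noteq> 0" "(\<lambda>w. k * y w) = \<psi> l" "l \<in> L"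
      unfolding tors_reps_def by blast
    have "(\<lambda>w. k * \<phi> y w) = \<phi> (\<lambda>w. k * y w)" using lin(2) unfolding int_linear_def by simp
    then have "\<phi> y \<in> tors_reps V L" unfolding tors_reps_def using Z(2)[OF y(1)] y(2-4) inv by auto
    then show "y \<in> \<psi> ` tors_reps V L" using inv(2)[of y] by (metis image_eqI)
  qed
qed

lemma quot_rel_class_image:
  assumes a: "lin_aut_on V \<psi> \<phi>" and x: "x \<in> int_vecs V"
  shows "quot_rel V (\<psi> ` L) `` {\<psi> x} = \<psi> ` (quot_rel V L `` {x})"
proof
  have lin: "int_linear \<psi>" and inv: "\<And>x. \<phi> (\<psi> x) = x" "\<And>x. \<psi> (\<phi> x) = x"
    and Z: "\<And>x. x \<in> int_vecs V \<Longrightarrow> \<psi> x \<in> int_vecs V" "\<And>x. x \<in> int_vecs V \<Longrightarrow> \<phi> x \<in> int_vecs V"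
    using a unfolding lin_aut_on_def by auto
  show "\<psi> ` (quot_rel V L `` {x}) \<subseteq> quot_rel V (\<psi> ` L) `` {\<psi> x}"
    unfolding quot_rel_def using Z(1) x by (auto simp: int_linear_diff[OF lin, symmetric])
  show "quot_rel V (\<psi> ` L) `` {\<psi> x} \<subseteq> \<psi> ` (quot_rel V L `` {x})"
  proof
    fix z assume "z \<in> quot_rel V (\<psi> ` L) `` {\<psi> x}"
    then obtain l where z: "z \<in> int_vecs V" "\<psi> x - z = \<psi> l" "l \<in> L" unfolding quot_rel_def by blast
    have "\<psi> (x - \<phi> z) = \<psi> l" using z(2) inv by (simp add: int_linear_diff[OF lin])
    then have "\<phi> (\<psi> (x - \<phi> z)) = \<phi> (\<psi> l)" by (rule arg_cong)
    then have "x - \<phi> z = l" by (simp only: inv(1))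
    then have "\<phi> z \<in> quot_rel V L `` {x}" unfolding quot_rel_def using x Z(2)[OF z(1)] z(3) by auto
    then show "z \<in> \<psi> ` (quot_rel V L `` {x})" using inv(2)[of z] by (metis image_eqI)
  qed
qed

lemma quot_tors_card_image:
  assumes a: "lin_aut_on V \<psi> \<phi>"
  shows "quot_tors_card V (\<psi> ` L) = quot_tors_card V L"
proof -
  have "inj \<psi>" using a unfolding lin_aut_on_def by (metis injI)
  then have inj: "inj (image \<psi>)" by (simp add: inj_image_eq_iff inj_on_def)
  have "tors_reps V (\<psi> ` L) // quot_rel V (\<psi> ` L) = (\<lambda>x. quot_rel V (\<psi> ` L) `` {\<psi> x}) ` tors_reps V L"
    unfolding tors_reps_image[OF a] quotient_def by blast
  also have "\<dots> = (\<lambda>x. \<psi> ` (quot_rel V L `` {x})) ` tors_reps V L"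
    using quot_rel_class_image[OF a] unfolding tors_reps_def by (intro image_cong) auto
  also have "\<dots> = image \<psi> ` (tors_reps V L // quot_rel V L)"
    unfolding quotient_def by blast
  finally show ?thesis
    unfolding quot_tors_card_def using card_image[OF inj_on_subset[OF inj]] by simp
qed

lemma indep_cards_image_subset:
  assumes a: "lin_aut_on V \<psi> \<phi>"
  shows "indep_cards V L \<subseteq> indep_cards V (\<psi> ` L)"
proof
  have lin: "int_linear \<psi>" and inv: "\<And>x. \<phi> (\<psi> x) = x"
    and Z: "\<And>x. x \<in> int_vecs V \<Longrightarrow> \<psi> x \<in> int_vecs V"
    using a unfolding lin_aut_on_def by auto
  have inj: "inj \<psi>" using inv by (metis injI)
  fix n assume "n \<in> indep_cards V L"
  then obtain S where S: "n = card S" "finite S" "S \<subseteq> int_vecs V"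
    and indep: "\<And>c. (\<lambda>w. \<Sum>s\<in>S. c s * s w) \<in> L \<Longrightarrow> \<forall>s\<in>S. c s = 0"
    unfolding indep_cards_def by blast
  have injS: "inj_on \<psi> S" using inj_on_subset[OF inj] by blast
  have "\<forall>t\<in>\<psi> ` S. c t = 0" if in_image: "(\<lambda>w. \<Sum>t\<in>\<psi> ` S. c t * t w) \<in> \<psi> ` L" for c
  proof -
    have "(\<lambda>w. \<Sum>t\<in>\<psi> ` S. c t * t w) = (\<lambda>w. \<Sum>s\<in>S. c (\<psi> s) * \<psi> s w)"
      using sum.reindex[OF injS, of "\<lambda>t. c t * t w" for w] by (simp add: o_def)
    also have "\<dots> = \<psi> (\<lambda>w. \<Sum>s\<in>S. c (\<psi> s) * s w)"
      by (rule int_linear_lincomb[OF lin, symmetric])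
    finally obtain l where l: "l \<in> L" "\<psi> (\<lambda>w. \<Sum>s\<in>S. c (\<psi> s) * s w) = \<psi> l"
      using in_image by auto
    then have "\<phi> (\<psi> (\<lambda>w. \<Sum>s\<in>S. c (\<psi> s) * s w)) = \<phi> (\<psi> l)" by simp
    then have "(\<lambda>w. \<Sum>s\<in>S. c (\<psi> s) * s w) \<in> L"
      using l(1) by (simp only: inv)
    then show ?thesis using indep[of "\<lambda>s. c (\<psi> s)"] by auto
  qed
  moreover have "card (\<psi> ` S) = n" "finite (\<psi> ` S)" "\<psi> ` S \<subseteq> int_vecs V"
    using S card_image[OF injS] Z by auto
  ultimately show "n \<in> indep_cards V (\<psi> ` L)" unfolding indep_cards_def by blast
qed

lemma quot_rank_image:
  assumes a: "lin_aut_on V \<psi> \<phi>"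
  shows "quot_rank V (\<psi> ` L) = quot_rank V L"
proof -
  have "\<phi> ` \<psi> ` L = L" using a unfolding lin_aut_on_def by (simp add: image_comp)
  then have "indep_cards V (\<psi> ` L) \<subseteq> indep_cards V L"
    using indep_cards_image_subset[OF lin_aut_on_sym[OF a], of "\<psi> ` L"] by simp
  then have "indep_cards V (\<psi> ` L) = indep_cards V L"
    using indep_cards_image_subset[OF a, of L] by (rule subset_antisym)
  then show ?thesis unfolding quot_rank_def by simp
qed

section \<open>Matrix pencils and elementary operations\<close>

definition mat_act :: "'v set \<Rightarrow> ('v \<Rightarrow> 'v \<Rightarrow> int) \<Rightarrow> ('v \<Rightarrow> int) \<Rightarrow> ('v \<Rightarrow> int)" where
  "mat_act V N f = (\<lambda>w. if w \<in> V then \<Sum>v\<in>V. f v * N v w else 0)"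

definition mat_image :: "'v set \<Rightarrow> ('v \<Rightarrow> 'v \<Rightarrow> int) \<Rightarrow> ('v \<Rightarrow> int) set" where
  "mat_image V N = mat_act V N ` int_vecs V"

definition row_add :: "'v \<Rightarrow> 'v \<Rightarrow> int \<Rightarrow> ('v \<Rightarrow> 'v \<Rightarrow> int) \<Rightarrow> ('v \<Rightarrow> 'v \<Rightarrow> int)" where
  "row_add i k c M = (\<lambda>v w. if v = k then M k w + c * M i w else M v w)"

definition col_add :: "'v \<Rightarrow> 'v \<Rightarrow> int \<Rightarrow> ('v \<Rightarrow> 'v \<Rightarrow> int) \<Rightarrow> ('v \<Rightarrow> 'v \<Rightarrow> int)" where
  "col_add i k c M = (\<lambda>v w. if w = k then M v k + c * M v i else M v w)"

definition col_swap :: "'v \<Rightarrow> 'v \<Rightarrow> ('v \<Rightarrow> 'v \<Rightarrow> int) \<Rightarrow> ('v \<Rightarrow> 'v \<Rightarrow> int)" where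
  "col_swap i k M = (\<lambda>v w. M v (transpose i k w))"

definition coord_add :: "'v \<Rightarrow> 'v \<Rightarrow> int \<Rightarrow> ('v \<Rightarrow> int) \<Rightarrow> ('v \<Rightarrow> int)" where
  "coord_add i k c g = g(k := g k + c * g i)"

definition coord_swap :: "'v \<Rightarrow> 'v \<Rightarrow> ('v \<Rightarrow> int) \<Rightarrow> ('v \<Rightarrow> int)" where
  "coord_swap i k g = g \<circ> transpose i k"

lemma lin_aut_on_coord_add:
  assumes "i \<in> V" "k \<in> V" "i \<noteq> k"
  shows "lin_aut_on V (coord_add i k c) (coord_add i k (- c))"
  using assms unfolding lin_aut_on_def int_linear_def coord_add_def int_vecs_def
  by (auto simp: fun_eq_iff algebra_simps)

lemma lin_aut_on_coord_swap:
  assumes "i \<in> V" "k \<in> V"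
  shows "lin_aut_on V (coord_swap i k) (coord_swap i k)"
  using assms unfolding lin_aut_on_def int_linear_def coord_swap_def int_vecs_def
  by (auto simp: fun_eq_iff transpose_def)

lemma mat_act_row_add:
  assumes "finite V" "i \<in> V" "k \<in> V" "i \<noteq> k"
  shows "mat_act V (row_add i k c N) f = mat_act V N (coord_add k i c f)"
proof (rule ext)
  fix w
  have "(\<Sum>v\<in>V. f v * row_add i k c N v w) = (\<Sum>v\<in>V. f v * N v w + (if v = k then f k * c * N i w else 0))"
    by (rule sum.cong) (auto simp: row_add_def algebra_simps)
  moreover have "(\<Sum>v\<in>V. coord_add k i c f v * N v w)
      = (\<Sum>v\<in>V. f v * N v w + (if v = i then c * f k * N i w else 0))"
    by (rule sum.cong) (auto simp: coord_add_def algebra_simps)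
  ultimately show "mat_act V (row_add i k c N) f w = mat_act V N (coord_add k i c f) w"
    unfolding mat_act_def sum.distrib using assms by (simp add: sum.delta)
qed

lemma mat_image_row_add:
  assumes "finite V" "i \<in> V" "k \<in> V" "i \<noteq> k"
  shows "mat_image V (row_add i k c N) = mat_image V N"
proof -
  have "mat_image V (row_add i k c N) = mat_act V N ` coord_add k i c ` int_vecs V"
    unfolding mat_image_def mat_act_row_add[OF assms] by (simp add: image_image)
  then show ?thesis
    unfolding mat_image_def lin_aut_on_image_int_vecs[OF lin_aut_on_coord_add[OF assms(3,2) assms(4)[symmetric]]] .
qed

lemma mat_image_col_add:
  assumes "i \<in> V" "k \<in> V"
  shows "mat_image V (col_add i k c N) = coord_add i k c ` mat_image V N"
proof -
  have "mat_act V (col_add i k c N) f = coord_add i k c (mat_act V N f)" for f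
    unfolding mat_act_def coord_add_def col_add_def using assms
    by (auto simp: fun_eq_iff sum.distrib sum_distrib_left algebra_simps)
  then show ?thesis unfolding mat_image_def by (simp add: image_image)
qed

lemma mat_image_col_swap:
  assumes "i \<in> V" "k \<in> V"
  shows "mat_image V (col_swap i k N) = coord_swap i k ` mat_image V N"
proof -
  have "mat_act V (col_swap i k N) f = coord_swap i k (mat_act V N f)" for f
    unfolding mat_act_def coord_swap_def col_swap_def using assms
    by (auto simp: fun_eq_iff transpose_def)
  then show ?thesis unfolding mat_image_def by (simp add: image_image)
qed

definition pencil :: "('v \<Rightarrow> 'v \<Rightarrow> int) \<Rightarrow> ('v \<Rightarrow> 'v \<Rightarrow> int) \<Rightarrow> 'v \<Rightarrow> 'v \<Rightarrow> int poly" where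
  "pencil N C v w = [:N v w, C v w:]"

inductive pencil_step ::
    "'v set \<Rightarrow> ('v \<Rightarrow> 'v \<Rightarrow> int) \<times> ('v \<Rightarrow> 'v \<Rightarrow> int) \<Rightarrow> ('v \<Rightarrow> 'v \<Rightarrow> int) \<times> ('v \<Rightarrow> 'v \<Rightarrow> int) \<Rightarrow> bool"
  for V where
  row_add: "\<lbrakk>i \<in> V; k \<in> V; i \<noteq> k\<rbrakk> \<Longrightarrow> pencil_step V (N, C) (row_add i k c N, row_add i k c C)"
| col_add: "\<lbrakk>i \<in> V; k \<in> V; i \<noteq> k\<rbrakk> \<Longrightarrow> pencil_step V (N, C) (col_add i k c N, col_add i k c C)"
| col_swap: "\<lbrakk>i \<in> V; k \<in> V; i \<noteq> k\<rbrakk> \<Longrightarrow> pencil_step V (N, C) (col_swap i k N, col_swap i k C)"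

lemma pencil_step_mat_image:
  assumes "pencil_step V (N, C) (N', C')" "finite V"
  shows "\<exists>\<psi> \<phi>. lin_aut_on V \<psi> \<phi> \<and> mat_image V N' = \<psi> ` mat_image V N"
  using assms(1)
proof cases
  case (row_add i k c)
  then show ?thesis
    using lin_aut_on_id mat_image_row_add[OF assms(2)] by (intro exI[of _ "\<lambda>x. x"]) simp
next
  case (col_add i k c)
  then show ?thesis
    using lin_aut_on_coord_add[OF col_add(3-5)] mat_image_col_add[OF col_add(3,4)] by blast
next
  case (col_swap i k)
  then show ?thesis
    using lin_aut_on_coord_swap[OF col_swap(3,4)] mat_image_col_swap[OF col_swap(3,4)] by blast
qed

lemma pencil_step_det:
  assumes "pencil_step V (N, C) (N', C')" "finite V"
  shows "det_on V (pencil N' C') = det_on V (pencil N C) \<or> det_on V (pencil N' C') = - det_on V (pencil N C)"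
  using assms(1)
proof cases
  case (row_add i k c)
  have "pencil N' C' = (\<lambda>v w. if v = k then pencil N C k w + [:c:] * pencil N C i w else pencil N C v w)"
    unfolding row_add pencil_def row_add_def by (auto simp: fun_eq_iff)
  then show ?thesis using det_on_row_add[OF assms(2) row_add(3-5), of "pencil N C" "[:c:]"] by simp
next
  case (col_add i k c)
  have "pencil N' C' = (\<lambda>v w. if w = k then pencil N C v k + [:c:] * pencil N C v i else pencil N C v w)"
    unfolding col_add pencil_def col_add_def by (auto simp: fun_eq_iff)
  then show ?thesis using det_on_col_add[OF assms(2) col_add(3-5), of "pencil N C" "[:c:]"] by simp
next
  case (col_swap i k)
  have "pencil N' C' = (\<lambda>v w. pencil N C v (transpose i k w))"
    unfolding col_swap pencil_def col_swap_def by (auto simp: fun_eq_iff)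
  then show ?thesis using det_on_swap_cols[OF assms(2) col_swap(3-5), of "pencil N C"] by simp
qed

lemma pencil_reach_mat_image:
  assumes "(pencil_step V)\<^sup>*\<^sup>* (N, C) (N', C')" "finite V"
  shows "\<exists>\<psi> \<phi>. lin_aut_on V \<psi> \<phi> \<and> mat_image V N' = \<psi> ` mat_image V N"
  using assms(1)
proof (induction rule: rtranclp_induct2)
  case refl
  show ?case using lin_aut_on_id by (intro exI[of _ "\<lambda>x. x"]) simp
next
  case (step N1 C1 N2 C2)
  obtain \<psi>1 \<phi>1 where 1: "lin_aut_on V \<psi>1 \<phi>1" "mat_image V N1 = \<psi>1 ` mat_image V N"
    using step.IH by blast
  obtain \<psi>2 \<phi>2 where 2: "lin_aut_on V \<psi>2 \<phi>2" "mat_image V N2 = \<psi>2 ` mat_image V N1"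
    using pencil_step_mat_image[OF step.hyps(2) assms(2)] by blast
  have "mat_image V N2 = (\<psi>2 \<circ> \<psi>1) ` mat_image V N"
    using 1(2) 2(2) by (simp add: image_comp)
  then show ?case using lin_aut_on_comp[OF 1(1) 2(1)] by blast
qed

lemma pencil_reach_det:
  assumes "(pencil_step V)\<^sup>*\<^sup>* (N, C) (N', C')" "finite V"
  shows "det_on V (pencil N' C') = det_on V (pencil N C) \<or> det_on V (pencil N' C') = - det_on V (pencil N C)"
  using assms(1)
proof (induction rule: rtranclp_induct2)
  case (step N1 C1 N2 C2)
  then show ?case using pencil_step_det[OF _ assms(2)] by (metis minus_minus)
qed simp

section \<open>Diagonalization\<close>

definition diagonal_on :: "'v set \<Rightarrow> ('v \<Rightarrow> 'v \<Rightarrow> int) \<Rightarrow> bool" where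
  "diagonal_on V N \<longleftrightarrow> (\<forall>v\<in>V. \<forall>w\<in>V. v \<noteq> w \<longrightarrow> N v w = 0)"

definition diagonal_outside :: "'v set \<Rightarrow> 'v set \<Rightarrow> ('v \<Rightarrow> 'v \<Rightarrow> int) \<Rightarrow> bool" where
  "diagonal_outside V W N \<longleftrightarrow> (\<forall>v\<in>V. \<forall>w\<in>V. v \<noteq> w \<longrightarrow> (v \<notin> W \<or> w \<notin> W) \<longrightarrow> N v w = 0)"

lemma diagonal_outsideD:
  "diagonal_outside V W N \<Longrightarrow> v \<in> V \<Longrightarrow> w \<in> V \<Longrightarrow> v \<noteq> w \<Longrightarrow> v \<notin> W \<or> w \<notin> W \<Longrightarrow> N v w = 0"
  unfolding diagonal_outside_def by blast

lemma diagonal_outside_col_vanishes: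
  assumes "diagonal_outside V W N" "W \<subseteq> V" "q \<in> W" "\<forall>v\<in>W - {p}. N v q = 0"
  shows "\<forall>v\<in>V. v \<noteq> p \<longrightarrow> N v q = 0"
proof (intro ballI impI)
  fix v assume "v \<in> V" "v \<noteq> p"
  show "N v q = 0"
  proof (cases "v \<in> W")
    case True
    then show ?thesis using assms(4) \<open>v \<noteq> p\<close> by simp
  next
    case False
    then show ?thesis using assms(2,3) \<open>v \<in> V\<close> by (intro diagonal_outsideD[OF assms(1)]) auto
  qed
qed

lemma diagonal_outside_row_vanishes:
  assumes "diagonal_outside V W N" "W \<subseteq> V" "p \<in> W" "\<forall>w\<in>W - {q}. N p w = 0"
  shows "\<forall>w\<in>V. w \<noteq> q \<longrightarrow> N p w = 0"
proof (intro ballI impI)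
  fix w assume "w \<in> V" "w \<noteq> q"
  show "N p w = 0"
  proof (cases "w \<in> W")
    case True
    then show ?thesis using assms(4) \<open>w \<noteq> q\<close> by simp
  next
    case False
    then show ?thesis using assms(2,3) \<open>w \<in> V\<close> by (intro diagonal_outsideD[OF assms(1)]) auto
  qed
qed

lemma diagonal_outside_row_add:
  assumes "diagonal_outside V W N" "W \<subseteq> V" "i \<in> W" "k \<in> W"
  shows "diagonal_outside V W (row_add i k c N)"
  unfolding diagonal_outside_def
proof (intro ballI impI)
  fix v w assume vw: "v \<in> V" "w \<in> V" "v \<noteq> w" "v \<notin> W \<or> w \<notin> W"
  show "row_add i k c N v w = 0"
  proof (cases "v = k")
    case True
    then have "w \<notin> W" using vw assms(4) by auto
    moreover have "w \<noteq> i" "w \<noteq> k" "i \<in> V" "k \<in> V" using assms(2-4) \<open>w \<notin> W\<close> by auto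
    ultimately have "N k w = 0" "N i w = 0" using assms(1) vw unfolding diagonal_outside_def by auto
    then show ?thesis using True unfolding row_add_def by simp
  next
    case False
    then show ?thesis using assms(1) vw unfolding diagonal_outside_def row_add_def by auto
  qed
qed

lemma diagonal_outside_col_add:
  assumes "diagonal_outside V W N" "W \<subseteq> V" "i \<in> W" "k \<in> W"
  shows "diagonal_outside V W (col_add i k c N)"
  unfolding diagonal_outside_def
proof (intro ballI impI)
  fix v w assume vw: "v \<in> V" "w \<in> V" "v \<noteq> w" "v \<notin> W \<or> w \<notin> W"
  show "col_add i k c N v w = 0"
  proof (cases "w = k")
    case True
    then have "v \<notin> W" using vw assms(4) by auto
    moreover have "v \<noteq> i" "v \<noteq> k" "i \<in> V" "k \<in> V" using assms(2-4) \<open>v \<notin> W\<close> by auto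
    ultimately have "N v k = 0" "N v i = 0" using assms(1) vw unfolding diagonal_outside_def by auto
    then show ?thesis using True unfolding col_add_def by simp
  next
    case False
    then show ?thesis using assms(1) vw unfolding diagonal_outside_def col_add_def by auto
  qed
qed

lemma diagonal_outside_col_swap:
  assumes "diagonal_outside V W N" "W \<subseteq> V" "p \<in> W" "q \<in> W"
    and row_p: "\<forall>w\<in>V. w \<noteq> q \<longrightarrow> N p w = 0" and col_q: "\<forall>v\<in>V. v \<noteq> p \<longrightarrow> N v q = 0"
  shows "diagonal_outside V (W - {p}) (col_swap p q N)"
  unfolding diagonal_outside_def col_swap_def
proof (intro ballI impI)
  fix v w assume vw: "v \<in> V" "w \<in> V" "v \<noteq> w" "v \<notin> W - {p} \<or> w \<notin> W - {p}"
  have "p \<in> V" "q \<in> V" using assms(2-4) by auto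
  then have tw: "transpose p q w \<in> V" using vw(2) by (auto simp: transpose_def)
  show "N v (transpose p q w) = 0"
  proof (cases "v = p")
    case True
    then show ?thesis using row_p tw vw(3) by (auto simp: transpose_def)
  next
    case False
    then consider "w = p" | "w \<noteq> p" "w = q" | "w \<noteq> p" "w \<noteq> q" by blast
    then show ?thesis
    proof cases
      case 1
      then show ?thesis using col_q vw(1) False by simp
    next
      case 2
      then have "v \<notin> W" using vw assms(4) False by auto
      then show ?thesis using 2 assms(1) vw(1) \<open>p \<in> V\<close> False unfolding diagonal_outside_def by simp
    next
      case 3
      then show ?thesis using assms(1) vw False unfolding diagonal_outside_def by simp
    qed
  qed
qed

lemma pencil_reach_col_swap:
  assumes "p \<in> V" "q \<in> V"
  shows "(pencil_step V)\<^sup>*\<^sup>* (N, C) (col_swap p q N, col_swap p q C)"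
proof (cases "p = q")
  case True
  then have "col_swap p q M = M" for M by (simp add: col_swap_def)
  then show ?thesis by simp
next
  case False
  then show ?thesis using assms by (blast intro: pencil_step.col_swap)
qed

lemma add_neg_div_mult_eq_mod: "(a::int) + - (a div e) * e = a mod e"
  using minus_div_mult_eq_mod[of a e] by simp

lemma pencil_clear_column:
  assumes "finite R" "R \<subseteq> W - {p}" "W \<subseteq> V" "p \<in> W" "diagonal_outside V W N"
    and "\<forall>v\<in>R. N p q dvd N v q"
  shows "\<exists>N' C'. (pencil_step V)\<^sup>*\<^sup>* (N, C) (N', C') \<and> diagonal_outside V W N' \<and>
    (\<forall>v\<in>R. N' v q = 0) \<and> (\<forall>v. v \<notin> R \<longrightarrow> N' v = N v)"
  using assms(1,2,6)
proof (induction R rule: finite_induct)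
  case empty
  show ?case using assms(5) by blast
next
  case (insert x R)
  then obtain N1 C1 where N1: "(pencil_step V)\<^sup>*\<^sup>* (N, C) (N1, C1)" "diagonal_outside V W N1"
    "\<forall>v\<in>R. N1 v q = 0" "\<forall>v. v \<notin> R \<longrightarrow> N1 v = N v"
    by auto
  have x: "x \<in> W" "x \<noteq> p" using insert.prems(1) by auto
  have N1x: "N1 x = N x" "N1 p = N p" using N1(4) insert.hyps(2) insert.prems(1) by auto
  define N2 where "N2 = row_add p x (- (N x q div N p q)) N1"
  define C2 where "C2 = row_add p x (- (N x q div N p q)) C1"
  have "pencil_step V (N1, C1) (N2, C2)"
    unfolding N2_def C2_def using x assms(3,4) by (intro pencil_step.row_add) auto
  then have "(pencil_step V)\<^sup>*\<^sup>* (N, C) (N2, C2)" using N1(1) by simp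
  moreover have "diagonal_outside V W N2"
    unfolding N2_def by (rule diagonal_outside_row_add[OF N1(2) assms(3,4) x(1)])
  moreover have "N2 x q = 0"
    using insert.prems(2) N1x add_neg_div_mult_eq_mod[of "N x q" "N p q"]
    unfolding N2_def row_add_def by simp
  moreover have "\<forall>v\<in>R. N2 v q = 0" "\<forall>v. v \<notin> insert x R \<longrightarrow> N2 v = N v"
    using N1(3,4) insert.hyps(2) unfolding N2_def row_add_def by (auto simp: fun_eq_iff)
  ultimately show ?case by auto
qed

lemma pencil_clear_row:
  assumes "finite R" "R \<subseteq> W - {q}" "W \<subseteq> V" "q \<in> W" "diagonal_outside V W N"
    and "\<forall>w\<in>R. N p q dvd N p w" and col_q: "\<forall>v\<in>V. v \<noteq> p \<longrightarrow> N v q = 0"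
  shows "\<exists>N' C'. (pencil_step V)\<^sup>*\<^sup>* (N, C) (N', C') \<and> diagonal_outside V W N' \<and>
    (\<forall>w\<in>R. N' p w = 0) \<and> (\<forall>v w. w \<notin> R \<longrightarrow> N' v w = N v w) \<and> (\<forall>v\<in>V. \<forall>w. v \<noteq> p \<longrightarrow> N' v w = N v w)"
  using assms(1,2,6)
proof (induction R rule: finite_induct)
  case empty
  show ?case using assms(5) by blast
next
  case (insert x R)
  then obtain N1 C1 where N1: "(pencil_step V)\<^sup>*\<^sup>* (N, C) (N1, C1)" "diagonal_outside V W N1"
    "\<forall>w\<in>R. N1 p w = 0" "\<forall>v w. w \<notin> R \<longrightarrow> N1 v w = N v w" "\<forall>v\<in>V. \<forall>w. v \<noteq> p \<longrightarrow> N1 v w = N v w"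
    by auto
  have x: "x \<in> W" "x \<noteq> q" using insert.prems(1) by auto
  have N1x: "N1 p x = N p x" "\<And>v. N1 v q = N v q" using N1(4) insert.hyps(2) insert.prems(1) by auto
  define N2 where "N2 = col_add q x (- (N p x div N p q)) N1"
  define C2 where "C2 = col_add q x (- (N p x div N p q)) C1"
  have "pencil_step V (N1, C1) (N2, C2)"
    unfolding N2_def C2_def using x assms(3,4) by (intro pencil_step.col_add) auto
  then have "(pencil_step V)\<^sup>*\<^sup>* (N, C) (N2, C2)" using N1(1) by simp
  moreover have "diagonal_outside V W N2"
    unfolding N2_def by (rule diagonal_outside_col_add[OF N1(2) assms(3,4) x(1)])
  moreover have "N2 p x = 0"
    using insert.prems(2) N1x add_neg_div_mult_eq_mod[of "N p x" "N p q"]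
    unfolding N2_def col_add_def by simp
  moreover have "\<forall>w\<in>R. N2 p w = 0" "\<forall>v w. w \<notin> insert x R \<longrightarrow> N2 v w = N v w"
    using N1(3,4) insert.hyps(2) unfolding N2_def col_add_def by auto
  moreover have "\<forall>v\<in>V. \<forall>w. v \<noteq> p \<longrightarrow> N2 v w = N v w"
    using N1(5) N1x(2) col_q unfolding N2_def col_add_def by auto
  ultimately show ?case by blast
qed

lemma pencil_split_pivot:
  assumes "finite V" "W \<subseteq> V" "diagonal_outside V W N" "p \<in> W" "q \<in> W"
    and "\<forall>v\<in>W - {p}. N p q dvd N v q" "\<forall>w\<in>W - {q}. N p q dvd N p w"
  shows "\<exists>N' C'. (pencil_step V)\<^sup>*\<^sup>* (N, C) (N', C') \<and> diagonal_outside V (W - {p}) N'"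
proof -
  have fW: "finite W" using assms(1,2) finite_subset by blast
  obtain N1 C1 where N1: "(pencil_step V)\<^sup>*\<^sup>* (N, C) (N1, C1)" "diagonal_outside V W N1"
    "\<forall>v\<in>W - {p}. N1 v q = 0" "\<forall>v. v \<notin> W - {p} \<longrightarrow> N1 v = N v"
    using pencil_clear_column[of "W - {p}" W p V N q C] fW assms(2-4,6) by auto
  have col_q: "\<forall>v\<in>V. v \<noteq> p \<longrightarrow> N1 v q = 0"
    using diagonal_outside_col_vanishes[OF N1(2) assms(2,5) N1(3)] .
  obtain N2 C2 where N2: "(pencil_step V)\<^sup>*\<^sup>* (N1, C1) (N2, C2)" "diagonal_outside V W N2"
    "\<forall>w\<in>W - {q}. N2 p w = 0" "\<forall>v w. w \<notin> W - {q} \<longrightarrow> N2 v w = N1 v w"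
    "\<forall>v\<in>V. \<forall>w. v \<noteq> p \<longrightarrow> N2 v w = N1 v w"
    using pencil_clear_row[of "W - {q}" W q V N1 p C1] fW assms(2,5,7) N1(2,4) col_q by auto
  have row_p: "\<forall>w\<in>V. w \<noteq> q \<longrightarrow> N2 p w = 0"
    using diagonal_outside_row_vanishes[OF N2(2) assms(2,4) N2(3)] .
  have "\<forall>v\<in>V. v \<noteq> p \<longrightarrow> N2 v q = 0" using N2(5) col_q by simp
  then have "diagonal_outside V (W - {p}) (col_swap p q N2)"
    using diagonal_outside_col_swap[OF N2(2) assms(2,4,5) row_p] by blast
  moreover have "(pencil_step V)\<^sup>*\<^sup>* (N, C) (col_swap p q N2, col_swap p q C2)"
    using N1(1) N2(1) pencil_reach_col_swap[of p V q N2 C2] assms(2,4,5)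
    by (meson rtranclp_trans subsetD)
  ultimately show ?thesis by blast
qed

lemma pencil_step_row_reduce:
  assumes "W \<subseteq> V" "diagonal_outside V W N" "p \<in> W" "v \<in> W" "v \<noteq> p"
  shows "\<exists>N' C'. pencil_step V (N, C) (N', C') \<and> diagonal_outside V W N' \<and> N' v q = N v q mod N p q"
proof (intro exI conjI)
  let ?d = "- (N v q div N p q)"
  show "pencil_step V (N, C) (row_add p v ?d N, row_add p v ?d C)"
    using assms by (intro pencil_step.row_add) auto
  show "diagonal_outside V W (row_add p v ?d N)"
    by (rule diagonal_outside_row_add[OF assms(2,1,3,4)])
  show "row_add p v ?d N v q = N v q mod N p q"
    unfolding row_add_def using add_neg_div_mult_eq_mod[of "N v q" "N p q"] by simp
qed

lemma pencil_step_col_reduce: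
  assumes "W \<subseteq> V" "diagonal_outside V W N" "q \<in> W" "w \<in> W" "w \<noteq> q"
  shows "\<exists>N' C'. pencil_step V (N, C) (N', C') \<and> diagonal_outside V W N' \<and> N' p w = N p w mod N p q"
proof (intro exI conjI)
  let ?d = "- (N p w div N p q)"
  show "pencil_step V (N, C) (col_add q w ?d N, col_add q w ?d C)"
    using assms by (intro pencil_step.col_add) auto
  show "diagonal_outside V W (col_add q w ?d N)"
    by (rule diagonal_outside_col_add[OF assms(2,1,3,4)])
  show "col_add q w ?d N p w = N p w mod N p q"
    unfolding col_add_def using assms(5) add_neg_div_mult_eq_mod[of "N p w" "N p q"] by simp
qed

lemma pencil_eliminate_pivot:
  assumes "finite V" "W \<subseteq> V" "diagonal_outside V W N" "p \<in> W" "q \<in> W" "N p q \<noteq> 0"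
  shows "\<exists>N' C' a. a \<in> W \<and> (pencil_step V)\<^sup>*\<^sup>* (N, C) (N', C') \<and> diagonal_outside V (W - {a}) N'"
  using assms(3-6)
proof (induction "nat \<bar>N p q\<bar>" arbitrary: N C p q rule: less_induct)
  case less
  let ?e = "N p q"
  have smaller: "nat \<bar>a mod ?e\<bar> < nat \<bar>?e\<bar>" for a
    using abs_mod_less[OF less.prems(4)] less.prems(4) by simp
  consider (col) v where "v \<in> W" "v \<noteq> p" "\<not> ?e dvd N v q"
    | (row) w where "w \<in> W" "w \<noteq> q" "\<not> ?e dvd N p w"
    | (divisible) "\<forall>v\<in>W - {p}. ?e dvd N v q" "\<forall>w\<in>W - {q}. ?e dvd N p w"
    by blast
  then show ?case
  proof cases
    case col
    then obtain N1 C1 where N1: "pencil_step V (N, C) (N1, C1)" "diagonal_outside V W N1"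
      "N1 v q = N v q mod ?e"
      using pencil_step_row_reduce[OF assms(2) less.prems(1,2)] by blast
    then have "N1 v q \<noteq> 0" "nat \<bar>N1 v q\<bar> < nat \<bar>?e\<bar>"
      using col(3) smaller by (simp_all add: dvd_eq_mod_eq_0)
    then obtain N' C' a where "a \<in> W" "(pencil_step V)\<^sup>*\<^sup>* (N1, C1) (N', C')"
        "diagonal_outside V (W - {a}) N'"
      using less.hyps[of N1 v q C1] N1(2) col(1) less.prems(3) by blast
    then show ?thesis
      using converse_rtranclp_into_rtranclp[of "pencil_step V" "(N, C)" "(N1, C1)"] N1(1) by blast
  next
    case row
    then obtain N1 C1 where N1: "pencil_step V (N, C) (N1, C1)" "diagonal_outside V W N1"
      "N1 p w = N p w mod ?e"
      using pencil_step_col_reduce[OF assms(2) less.prems(1,3)] by blast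
    then have "N1 p w \<noteq> 0" "nat \<bar>N1 p w\<bar> < nat \<bar>?e\<bar>"
      using row(3) smaller by (simp_all add: dvd_eq_mod_eq_0)
    then obtain N' C' a where "a \<in> W" "(pencil_step V)\<^sup>*\<^sup>* (N1, C1) (N', C')"
        "diagonal_outside V (W - {a}) N'"
      using less.hyps[of N1 p w C1] N1(2) row(1) less.prems(2) by blast
    then show ?thesis
      using converse_rtranclp_into_rtranclp[of "pencil_step V" "(N, C)" "(N1, C1)"] N1(1) by blast
  next
    case divisible
    then show ?thesis
      using pencil_split_pivot[OF assms(1,2) less.prems(1-3)] less.prems(2) by blast
  qed
qed

lemma pencil_diagonalizable:
  assumes "finite V"
  shows "\<exists>N' C'. (pencil_step V)\<^sup>*\<^sup>* (N, C) (N', C') \<and> diagonal_on V N'"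
proof -
  have "\<exists>N' C'. (pencil_step V)\<^sup>*\<^sup>* (N, C) (N', C') \<and> diagonal_on V N'"
    if "W \<subseteq> V" "diagonal_outside V W N" for W N C
    using that
  proof (induction "card W" arbitrary: W N C rule: less_induct)
    case less
    show ?case
    proof (cases "\<exists>p\<in>W. \<exists>q\<in>W. N p q \<noteq> 0")
      case False
      then have "diagonal_on V N"
        using less.prems(2) unfolding diagonal_on_def diagonal_outside_def by blast
      then show ?thesis by blast
    next
      case True
      then obtain p q where pq: "p \<in> W" "q \<in> W" "N p q \<noteq> 0" by blast
      obtain N1 C1 a where a: "a \<in> W" "(pencil_step V)\<^sup>*\<^sup>* (N, C) (N1, C1)" "diagonal_outside V (W - {a}) N1"
        using pencil_eliminate_pivot[OF assms less.prems pq] by blast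
      have "card (W - {a}) < card W"
        using a(1) assms less.prems(1) by (meson card_Diff1_less finite_subset)
      then obtain N' C' where "(pencil_step V)\<^sup>*\<^sup>* (N1, C1) (N', C')" "diagonal_on V N'"
        using less.hyps[of "W - {a}" N1 C1] a(3) less.prems(1) by blast
      then show ?thesis using a(2) by (meson rtranclp_trans)
    qed
  qed
  moreover have "diagonal_outside V V N" by (simp add: diagonal_outside_def)
  ultimately show ?thesis by blast
qed

section \<open>Diagonal pencils\<close>

lemma int_vectors_dependent:
  fixes x :: "'i \<Rightarrow> 'v \<Rightarrow> int"
  assumes "finite Z" "finite I" "card Z < card I"
  shows "\<exists>c. (\<exists>i\<in>I. c i \<noteq> 0) \<and> (\<forall>w\<in>Z. (\<Sum>i\<in>I. c i * x i w) = 0)"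
  using assms
proof (induction Z arbitrary: I x rule: finite_induct)
  case empty
  then obtain i where "i \<in> I" by fastforce
  then show ?case by (intro exI[of _ "\<lambda>_. 1"]) auto
next
  case (insert z Z)
  show ?case
  proof (cases "\<forall>i\<in>I. x i z = 0")
    case True
    obtain c where c: "\<exists>i\<in>I. c i \<noteq> 0" "\<forall>w\<in>Z. (\<Sum>i\<in>I. c i * x i w) = 0"
      using insert.IH[of I x] insert.prems insert.hyps by auto
    then show ?thesis using True by auto
  next
    case False
    then obtain i0 where i0: "i0 \<in> I" "x i0 z \<noteq> 0" by blast
    define I' where "I' = I - {i0}"
    \<comment> \<open>fraction-free elimination of coordinate z using the vector x i0\<close>
    define x' where "x' = (\<lambda>i w. x i0 z * x i w - x i z * x i0 w)"
    have "card Z < card I'"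
      unfolding I'_def using insert.prems i0(1) insert.hyps by (simp add: card_Diff_singleton)
    then obtain c' where c': "\<exists>i\<in>I'. c' i \<noteq> 0" "\<forall>w\<in>Z. (\<Sum>i\<in>I'. c' i * x' i w) = 0"
      using insert.IH[of I' x'] insert.prems(1) unfolding I'_def by auto
    define c where "c = (\<lambda>i. if i = i0 then - (\<Sum>j\<in>I'. c' j * x j z) else x i0 z * c' i)"
    have combine: "(\<Sum>i\<in>I. c i * x i w) = (\<Sum>i\<in>I'. c' i * x' i w)" for w
    proof -
      have "(\<Sum>i\<in>I. c i * x i w) = c i0 * x i0 w + (\<Sum>i\<in>I'. x i0 z * c' i * x i w)"
        unfolding I'_def using insert.prems(1) i0(1) by (simp add: sum.remove c_def)
      also have "\<dots> = (\<Sum>i\<in>I'. x i0 z * c' i * x i w - c' i * x i z * x i0 w)"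
        unfolding c_def by (simp add: sum_distrib_right sum_subtractf)
      also have "\<dots> = (\<Sum>i\<in>I'. c' i * x' i w)"
        by (rule sum.cong) (auto simp: x'_def algebra_simps)
      finally show ?thesis .
    qed
    have "(\<Sum>i\<in>I'. c' i * x' i z) = 0" unfolding x'_def by (simp add: algebra_simps)
    then have "\<forall>w\<in>insert z Z. (\<Sum>i\<in>I. c i * x i w) = 0" using combine c'(2) by auto
    moreover have "\<exists>i\<in>I. c i \<noteq> 0"
      using c'(1) i0(2) unfolding c_def I'_def by auto
    ultimately show ?thesis by blast
  qed
qed

definition diag_prod :: "'v set \<Rightarrow> ('v \<Rightarrow> 'v \<Rightarrow> int) \<Rightarrow> int" where
  "diag_prod V N = (\<Prod>v\<in>{v\<in>V. N v v \<noteq> 0}. N v v)"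

lemma diag_prod_nonzero: "finite V \<Longrightarrow> diag_prod V N \<noteq> 0"
  unfolding diag_prod_def by simp

lemma diag_entry_dvd_diag_prod: "finite V \<Longrightarrow> v \<in> V \<Longrightarrow> N v v \<noteq> 0 \<Longrightarrow> N v v dvd diag_prod V N"
  unfolding diag_prod_def by (rule dvd_prodI) auto

definition diag_residues :: "'v set \<Rightarrow> ('v \<Rightarrow> 'v \<Rightarrow> int) \<Rightarrow> ('v \<Rightarrow> int) \<Rightarrow> 'v \<Rightarrow> int" where
  "diag_residues V N y = restrict (\<lambda>v. y v mod \<bar>N v v\<bar>) {v\<in>V. N v v \<noteq> 0}"

context
  fixes V :: "'v set" and N :: "'v \<Rightarrow> 'v \<Rightarrow> int"
  assumes fin: "finite V" and diag: "diagonal_on V N"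
begin

lemma mat_image_diagonal: "mat_image V N = {g \<in> int_vecs V. \<forall>v\<in>V. N v v dvd g v}"
proof -
  have act: "mat_act V N f = (\<lambda>w. if w \<in> V then f w * N w w else 0)" for f
  proof (rule ext)
    fix w
    have "w \<in> V \<Longrightarrow> (\<Sum>v\<in>V. f v * N v w) = (\<Sum>v\<in>V. if v = w then f w * N w w else 0)"
      using diag unfolding diagonal_on_def by (intro sum.cong) auto
    then show "mat_act V N f w = (if w \<in> V then f w * N w w else 0)"
      unfolding mat_act_def using fin by simp
  qed
  show ?thesis
  proof
    show "mat_image V N \<subseteq> {g \<in> int_vecs V. \<forall>v\<in>V. N v v dvd g v}"
      unfolding mat_image_def act int_vecs_def by auto
    show "{g \<in> int_vecs V. \<forall>v\<in>V. N v v dvd g v} \<subseteq> mat_image V N"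
    proof
      fix g assume g: "g \<in> {g \<in> int_vecs V. \<forall>v\<in>V. N v v dvd g v}"
      define f where "f = (\<lambda>w. if w \<in> V \<and> N w w \<noteq> 0 then g w div N w w else 0)"
      have "mat_act V N f = g"
        using g unfolding act f_def int_vecs_def by (auto simp: fun_eq_iff)
      moreover have "f \<in> int_vecs V" unfolding f_def int_vecs_def by auto
      ultimately show "g \<in> mat_image V N" unfolding mat_image_def by blast
    qed
  qed
qed

lemma tors_reps_diagonal: "tors_reps V (mat_image V N) = {x \<in> int_vecs V. \<forall>v\<in>V. N v v = 0 \<longrightarrow> x v = 0}"
proof
  show "tors_reps V (mat_image V N) \<subseteq> {x \<in> int_vecs V. \<forall>v\<in>V. N v v = 0 \<longrightarrow> x v = 0}"
    unfolding tors_reps_def mat_image_diagonal by auto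
  show "{x \<in> int_vecs V. \<forall>v\<in>V. N v v = 0 \<longrightarrow> x v = 0} \<subseteq> tors_reps V (mat_image V N)"
  proof
    fix x assume x: "x \<in> {x \<in> int_vecs V. \<forall>v\<in>V. N v v = 0 \<longrightarrow> x v = 0}"
    have "\<forall>v\<in>V. N v v dvd diag_prod V N * x v"
      using x diag_entry_dvd_diag_prod[OF fin] by auto
    then have "(\<lambda>w. diag_prod V N * x w) \<in> mat_image V N"
      unfolding mat_image_diagonal using x int_vecs_scale by blast
    then show "x \<in> tors_reps V (mat_image V N)"
      unfolding tors_reps_def using x diag_prod_nonzero[OF fin] by blast
  qed
qed

lemma quot_rel_class_diagonal:
  assumes x: "x \<in> tors_reps V (mat_image V N)"
  shows "quot_rel V (mat_image V N) `` {x} = {y \<in> tors_reps V (mat_image V N). diag_residues V N y = diag_residues V N x}"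
proof -
  have xT: "x \<in> int_vecs V" "\<forall>v\<in>V. N v v = 0 \<longrightarrow> x v = 0" using x unfolding tors_reps_diagonal by auto
  have res: "diag_residues V N y = diag_residues V N x \<longleftrightarrow> (\<forall>v\<in>V. N v v \<noteq> 0 \<longrightarrow> N v v dvd x v - y v)" for y
  proof -
    have "diag_residues V N y = diag_residues V N x \<longleftrightarrow>
        (\<forall>v\<in>V. N v v \<noteq> 0 \<longrightarrow> y v mod \<bar>N v v\<bar> = x v mod \<bar>N v v\<bar>)"
      unfolding diag_residues_def restrict_def fun_eq_iff by auto
    then show ?thesis by (simp add: mod_eq_dvd_iff dvd_diff_commute)
  qed
  have "y \<in> quot_rel V (mat_image V N) `` {x} \<longleftrightarrow>
      y \<in> tors_reps V (mat_image V N) \<and> diag_residues V N y = diag_residues V N x" for y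
  proof
    assume "y \<in> quot_rel V (mat_image V N) `` {x}"
    then have y: "y \<in> int_vecs V" "\<forall>v\<in>V. N v v dvd x v - y v"
      unfolding quot_rel_def mat_image_diagonal by auto
    then have "\<forall>v\<in>V. N v v = 0 \<longrightarrow> y v = 0" using xT(2) by auto
    then show "y \<in> tors_reps V (mat_image V N) \<and> diag_residues V N y = diag_residues V N x"
      using y res unfolding tors_reps_diagonal by auto
  next
    assume "y \<in> tors_reps V (mat_image V N) \<and> diag_residues V N y = diag_residues V N x"
    then have y: "y \<in> int_vecs V" "\<forall>v\<in>V. N v v = 0 \<longrightarrow> y v = 0"
        "\<forall>v\<in>V. N v v \<noteq> 0 \<longrightarrow> N v v dvd x v - y v"
      unfolding tors_reps_diagonal res by auto
    then have "\<forall>v\<in>V. N v v dvd x v - y v" using xT(2) by auto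
    then show "y \<in> quot_rel V (mat_image V N) `` {x}"
      unfolding quot_rel_def mat_image_diagonal using xT(1) y(1) int_vecs_diff by auto
  qed
  then show ?thesis by blast
qed

lemma diag_residues_image:
  "diag_residues V N ` tors_reps V (mat_image V N) = PiE {v\<in>V. N v v \<noteq> 0} (\<lambda>v. {0..<\<bar>N v v\<bar>})"
proof
  show "diag_residues V N ` tors_reps V (mat_image V N) \<subseteq> PiE {v\<in>V. N v v \<noteq> 0} (\<lambda>v. {0..<\<bar>N v v\<bar>})"
    unfolding diag_residues_def by (auto simp: PiE_def)
  show "PiE {v\<in>V. N v v \<noteq> 0} (\<lambda>v. {0..<\<bar>N v v\<bar>}) \<subseteq> diag_residues V N ` tors_reps V (mat_image V N)"
  proof
    fix h assume h: "h \<in> PiE {v\<in>V. N v v \<noteq> 0} (\<lambda>v. {0..<\<bar>N v v\<bar>})"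
    define x where "x = (\<lambda>v. if v \<in> V \<and> N v v \<noteq> 0 then h v else 0)"
    have "x \<in> tors_reps V (mat_image V N)" unfolding tors_reps_diagonal x_def int_vecs_def by auto
    moreover have "diag_residues V N x = h"
      using h unfolding diag_residues_def x_def by (auto simp: fun_eq_iff PiE_def Pi_def extensional_def)
    ultimately show "h \<in> diag_residues V N ` tors_reps V (mat_image V N)" by (metis image_eqI)
  qed
qed

lemma quot_tors_card_diagonal: "int (quot_tors_card V (mat_image V N)) = \<bar>diag_prod V N\<bar>"
proof -
  let ?T = "tors_reps V (mat_image V N)" and ?F = "diag_residues V N"
  let ?class = "\<lambda>z. {y \<in> ?T. ?F y = z}"
  have quot: "?T // quot_rel V (mat_image V N) = ?class ` (?F ` ?T)"
    unfolding quotient_def using quot_rel_class_diagonal by (auto simp: image_image)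
  have "inj_on ?class (?F ` ?T)" by (rule inj_onI) blast
  then have "quot_tors_card V (mat_image V N) = card (?F ` ?T)"
    unfolding quot_tors_card_def quot by (rule card_image)
  also have "\<dots> = (\<Prod>v\<in>{v\<in>V. N v v \<noteq> 0}. nat \<bar>N v v\<bar>)"
    unfolding diag_residues_image using fin by (simp add: card_PiE)
  finally show ?thesis unfolding diag_prod_def by (simp add: of_nat_prod abs_prod)
qed

lemma indep_cards_diagonal_le:
  assumes "n \<in> indep_cards V (mat_image V N)"
  shows "n \<le> card {v\<in>V. N v v = 0}"
proof (rule ccontr)
  let ?Z = "{v\<in>V. N v v = 0}"
  assume "\<not> n \<le> card ?Z"
  from assms obtain S where S: "n = card S" "finite S" "S \<subseteq> int_vecs V"
    and indep: "\<And>c. (\<lambda>w. \<Sum>s\<in>S. c s * s w) \<in> mat_image V N \<Longrightarrow> \<forall>s\<in>S. c s = 0"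
    unfolding indep_cards_def by blast
  obtain c where c: "\<exists>s\<in>S. c s \<noteq> 0" "\<forall>w\<in>?Z. (\<Sum>s\<in>S. c s * s w) = 0"
    using int_vectors_dependent[of ?Z S "\<lambda>s. s"] fin S(1,2) \<open>\<not> n \<le> card ?Z\<close> by auto
  have "N v v dvd (\<Sum>s\<in>S. (diag_prod V N * c s) * s v)" if "v \<in> V" for v
  proof -
    have "(\<Sum>s\<in>S. (diag_prod V N * c s) * s v) = diag_prod V N * (\<Sum>s\<in>S. c s * s v)"
      by (simp add: sum_distrib_left mult.assoc)
    then show ?thesis using c(2) that diag_entry_dvd_diag_prod[OF fin that] by (cases "N v v = 0") auto
  qed
  then have "(\<lambda>w. \<Sum>s\<in>S. (diag_prod V N * c s) * s w) \<in> mat_image V N"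
    unfolding mat_image_diagonal using int_vecs_lincomb[OF S(3), of "\<lambda>s. diag_prod V N * c s"] by simp
  then show False using indep c(1) diag_prod_nonzero[OF fin] by fastforce
qed

lemma card_zero_diag_mem_indep_cards: "card {v\<in>V. N v v = 0} \<in> indep_cards V (mat_image V N)"
proof -
  let ?Z = "{v\<in>V. N v v = 0}"
  have fZ: "finite ?Z" using fin by simp
  define e where "e = (\<lambda>z w :: 'v. if w = z then 1 else 0 :: int)"
  have inj: "inj_on e ?Z" unfolding e_def inj_on_def by (metis zero_neq_one)
  have indep: "\<forall>s\<in>e ` ?Z. c s = 0" if "(\<lambda>w. \<Sum>s\<in>e ` ?Z. c s * s w) \<in> mat_image V N" for c
  proof
    fix s assume "s \<in> e ` ?Z"
    then obtain z where z: "z \<in> ?Z" "s = e z" by blast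
    have "(\<Sum>s\<in>e ` ?Z. c s * s z) = (\<Sum>z'\<in>?Z. if z' = z then c (e z) else 0)"
      unfolding sum.reindex[OF inj] by (rule sum.cong) (auto simp: e_def)
    then have "(\<Sum>s\<in>e ` ?Z. c s * s z) = c s" using z fZ by simp
    moreover have "N z z dvd (\<Sum>s\<in>e ` ?Z. c s * s z)" using that z(1) unfolding mat_image_diagonal by auto
    ultimately show "c s = 0" using z by simp
  qed
  have "e ` ?Z \<subseteq> int_vecs V" unfolding e_def int_vecs_def by auto
  then show ?thesis
    unfolding indep_cards_def mem_Collect_eq
    by (intro exI[of _ "e ` ?Z"]) (use card_image[OF inj] fZ indep in simp)
qed

lemma quot_rank_diagonal: "quot_rank V (mat_image V N) = card {v\<in>V. N v v = 0}"
  unfolding quot_rank_def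
proof (rule Max_eqI)
  show "finite (indep_cards V (mat_image V N))"
    using indep_cards_diagonal_le by (meson atMost_iff finite_atMost finite_subset subsetI)
qed (use indep_cards_diagonal_le card_zero_diag_mem_indep_cards in auto)

lemma diag_prod_dvd_coeff_pencil_term:
  assumes p: "p permutes V"
  shows "diag_prod V N dvd coeff (\<Prod>v\<in>V. pencil N C v (p v)) (card {v\<in>V. N v v = 0})"
proof -
  let ?Z = "{v\<in>V. N v v = 0}" and ?P = "{v\<in>V. N v v \<noteq> 0}"
  have pV: "p v \<in> V" if "v \<in> V" for v using p that by (simp add: permutes_in_image)
  have "(\<Prod>v\<in>?Z. pencil N C v (p v)) = (\<Prod>v\<in>?Z. [:0, 1:] * [:C v (p v):])"
  proof (rule prod.cong[OF refl])
    fix v assume v: "v \<in> ?Z"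
    then have "N v (p v) = 0" using diag pV[of v] unfolding diagonal_on_def by (cases "p v = v") auto
    then show "pencil N C v (p v) = [:0, 1:] * [:C v (p v):]" unfolding pencil_def by simp
  qed
  also have "\<dots> = [:0, 1:] ^ card ?Z * (\<Prod>v\<in>?Z. [:C v (p v):])"
    by (simp only: prod.distrib prod_constant)
  finally have Z_part: "(\<Prod>v\<in>?Z. pencil N C v (p v)) = [:0, 1:] ^ card ?Z * (\<Prod>v\<in>?Z. [:C v (p v):])" .
  \<comment> \<open>x ^ card ?Z divides the term, so the wanted coefficient is the constant term of the cofactor\<close>
  have "V = ?Z \<union> ?P" by auto
  then have "(\<Prod>v\<in>V. pencil N C v (p v)) = (\<Prod>v\<in>?Z \<union> ?P. pencil N C v (p v))" by simp
  also have "\<dots> = (\<Prod>v\<in>?Z. pencil N C v (p v)) * (\<Prod>v\<in>?P. pencil N C v (p v))"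
    by (rule prod.union_disjoint) (use fin in auto)
  also have "\<dots> = monom 1 (card ?Z) * ((\<Prod>v\<in>?Z. [:C v (p v):]) * (\<Prod>v\<in>?P. pencil N C v (p v)))"
    unfolding Z_part by (simp add: monom_altdef mult.assoc)
  finally have "(\<Prod>v\<in>V. pencil N C v (p v))
      = monom 1 (card ?Z) * ((\<Prod>v\<in>?Z. [:C v (p v):]) * (\<Prod>v\<in>?P. pencil N C v (p v)))" .
  then have coeff: "coeff (\<Prod>v\<in>V. pencil N C v (p v)) (card ?Z) = (\<Prod>v\<in>?Z. C v (p v)) * (\<Prod>v\<in>?P. N v (p v))"
    by (simp add: coeff_monom_mult poly_0_coeff_0[symmetric] poly_prod pencil_def)
  have "diag_prod V N dvd (\<Prod>v\<in>?P. N v (p v))"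
  proof (cases "\<forall>v\<in>?P. p v = v")
    case True
    then have "(\<Prod>v\<in>?P. N v (p v)) = diag_prod V N" unfolding diag_prod_def by (intro prod.cong) auto
    then show ?thesis by simp
  next
    case False
    then obtain v where v: "v \<in> ?P" "p v \<noteq> v" by blast
    then have "N v (p v) = 0" using diag pV[of v] unfolding diagonal_on_def by auto
    then show ?thesis using v fin by (subst prod_zero) auto
  qed
  then show ?thesis unfolding coeff by simp
qed

lemma diag_prod_dvd_coeff_det_pencil:
  "diag_prod V N dvd coeff (det_on V (pencil N C)) (card {v\<in>V. N v v = 0})"
  unfolding det_on_def coeff_sum
proof (rule dvd_sum)
  fix p assume "p \<in> {p. p permutes V}"
  then show "diag_prod V N dvd coeff (of_int (sign p) * (\<Prod>v\<in>V. pencil N C v (p v))) (card {v\<in>V. N v v = 0})"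
    using diag_prod_dvd_coeff_pencil_term[of p C] by (simp add: of_int_poly)
qed

end

section \<open>The Bowen--Franks group and the polynomial g_X\<close>

definition bf_matrix :: "('v,'e) pre_digraph \<Rightarrow> 'v \<Rightarrow> 'v \<Rightarrow> int" where
  "bf_matrix G v w = (if v = w then 1 else 0) - adj G v w"

lemma ZV_eq_int_vecs: "ZV G = int_vecs (verts G)"
  unfolding ZV_def int_vecs_def ..

lemma bf_image_eq_mat_image:
  assumes "finite (verts G)"
  shows "bf_image G = mat_image (verts G) (bf_matrix G)"
proof -
  have "bf_op G f w = mat_act (verts G) (bf_matrix G) f w" for f w
  proof (cases "w \<in> verts G")
    case True
    have "(\<Sum>v\<in>verts G. f v * bf_matrix G v w) = (\<Sum>v\<in>verts G. (if v = w then f w else 0) - f v * adj G v w)"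
      unfolding bf_matrix_def by (rule sum.cong) (auto simp: right_diff_distrib)
    also have "\<dots> = f w - (\<Sum>v\<in>verts G. f v * adj G v w)"
      using True assms by (simp add: sum_subtractf)
    finally show ?thesis unfolding bf_op_def mat_act_def using True by simp
  qed (simp add: bf_op_def mat_act_def)
  then show ?thesis unfolding bf_image_def mat_image_def ZV_eq_int_vecs by (metis ext)
qed

lemma bf_tors_card_eq: "bf_tors_card G = quot_tors_card (verts G) (bf_image G)"
  unfolding bf_tors_card_def quot_tors_card_def bf_tors_reps_def tors_reps_def bf_rel_def quot_rel_def
    ZV_eq_int_vecs ..

lemma bf_rank_eq: "bf_rank G = quot_rank (verts G) (bf_image G)"
  unfolding bf_rank_def quot_rank_def indep_cards_def ZV_eq_int_vecs ..

lemma gX_pcompose_eq_det_pencil: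
  "pcompose (gX G) [:1, 1:] = det_on (verts G) (pencil (bf_matrix G) (\<lambda>v w. - adj G v w))"
  unfolding gX_def pcompose_det_on pencil_def bf_matrix_def
  by (rule arg_cong[where f="det_on (verts G)"])
    (auto simp: fun_eq_iff pcompose_diff pcompose_pCons pcompose_1 one_pCons)

lemma gX_nonzero:
  assumes "finite (verts G)"
  shows "gX G \<noteq> 0"
proof -
  have "poly (gX G) 0 = det_on (verts G) (\<lambda>v w. if v = w then (1::int) else 0)"
    unfolding gX_def poly_det_on by (rule arg_cong[where f="det_on (verts G)"]) (auto simp: fun_eq_iff)
  then show ?thesis using det_on_id[OF assms, where 'a=int] by auto
qed

theorem theorem2p6:
  fixes G :: "('v,'e) pre_digraph"
  assumes "fin_digraph G"
    and "strongly_connected G"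
    and "delta G = 0"
  shows "\<exists>m::int. m \<noteq> 0 \<and> gX_star G = m * int (bf_tors_card G)"
proof -
  let ?V = "verts G"
  have fin: "finite ?V" using assms(1) by (rule fin_digraph.finite_verts)
  obtain N C where reach: "(pencil_step ?V)\<^sup>*\<^sup>* (bf_matrix G, \<lambda>v w. - adj G v w) (N, C)"
    and diag: "diagonal_on ?V N"
    using pencil_diagonalizable[OF fin] by blast
  obtain \<psi> \<phi> where aut: "lin_aut_on ?V \<psi> \<phi>" and img: "mat_image ?V N = \<psi> ` bf_image G"
    using pencil_reach_mat_image[OF reach fin] unfolding bf_image_eq_mat_image[OF fin] by blast
  have tors: "int (bf_tors_card G) = \<bar>diag_prod ?V N\<bar>"
    using quot_tors_card_diagonal[OF fin diag] quot_tors_card_image[OF aut]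
    unfolding bf_tors_card_eq img by simp
  have "rX G = card {v\<in>?V. N v v = 0}"
    using assms(3) quot_rank_diagonal[OF fin diag] quot_rank_image[OF aut]
    unfolding delta_def bf_rank_eq img by simp
  then have "diag_prod ?V N dvd gX_star G"
    using diag_prod_dvd_coeff_det_pencil[OF fin diag, of C] pencil_reach_det[OF reach fin]
    unfolding gX_star_def gX_pcompose_eq_det_pencil by (auto simp: coeff_minus)
  then obtain m where m: "gX_star G = diag_prod ?V N * m" ..
  have "gX_star G \<noteq> 0"
    unfolding gX_star_def rX_def by (rule coeff_pcompose_order_nonzero[OF gX_nonzero[OF fin]])
  then have "sgn (diag_prod ?V N) * m \<noteq> 0" using m by (auto simp: sgn_0_0)
  moreover have "gX_star G = (sgn (diag_prod ?V N) * m) * int (bf_tors_card G)"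
    unfolding m tors by (metis mult.assoc mult.commute sgn_mult_abs)
  ultimately show ?thesis by blast
qed

end
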